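(* Let $u_1,u_2,u_3,x_1,x_2,x_3,z_1,z_2$ be strings and suppose a computation of the queue automaton passes through the configurations $$u_1u_2u_3\,\|\,x_1x_2x_3 \;\vdash^*\; u_2u_3z_1\,\|\,x_2x_3 \;\vdash^*\; u_3z_1z_2\,\|\,x_3,$$ so that $x_2$ is consumed by $u_2$ with resultant $z_2$. Then $u_2$ and $z_2$ are subsequences of $x_2$, and moreover $x_2$ is a shuffle of $u_2$ and $z_2$, i.e. $x_2 = u_2\odot z_2$.
   Context: Strings are over a finite alphabet $\Sigma$; $\varepsilon$ is the empty string. A string $w$ is a shuffle of $u$ and $v$, written $w=u\odot v$, if there are (possibly empty) strings $x_i,y_i$ with $u=x_1\cdots x_k$, $v=y_1\cdots y_k$ and $w=x_1y_1x_2y_2\cdots x_ky_k$. A string $u'$ is a subsequence of $w$ if $w=u'\odot v$ for some $v$. The queue automaton: a configuration is written $Q\,\|\,x$, where $Q$ is the queue contents and $x$ is the remaining input. A single step $C\vdash C'$ is one of: from $Q\,\|\,\sigma x$ (with $\sigma$ a symbol) go to $Q\sigma\,\|\,x$ ($\sigma$ is pushed onto the right end of the queue), or, if $Q=\sigma Q'$, go to $Q'\,\|\,x$ (the input symbol $\sigma$ is matched against, and pops, the leftmost queue symbol). $C\vdash^* C'$ means $C'$ is reached from $C$ in zero or more steps; a computation is such a sequence of steps. When a computation passes through configurations $u_1u_2u_3\,\|\,x_1x_2x_3 \vdash^* u_2u_3z_1\,\|\,x_2x_3 \vdash^* u_3z_1z_2\,\|\,x_3$ we say $x_2$ is consumed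 by $u_2$ with resultant $z_2$. *)

theory Defs
  imports Main
begin

definition is_shuffle :: "'a list \<Rightarrow> 'a list \<Rightarrow> 'a list \<Rightarrow> bool" where
  "is_shuffle w u v \<longleftrightarrow>
     (\<exists>xs ys. length xs = length ys \<and> u = concat xs \<and> v = concat ys \<and>
              w = concat (map (\<lambda>(a, b). a @ b) (zip xs ys)))"

definition is_subseq :: "'a list \<Rightarrow> 'a list \<Rightarrow> bool" where
  "is_subseq u' w \<longleftrightarrow> (\<exists>v. is_shuffle w u' v)"

text \<open>Configurations Q || x are pairs (queue contents, remaining input).
  Single step of the queue automaton.\<close>
inductive qstep :: "'a list \<times> 'a list \<Rightarrow> 'a list \<times> 'a list \<Rightarrow> bool" where
  push: "qstep (Q, \<sigma> # x) (Q @ [\<sigma>], x)"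
| pop:  "qstep (\<sigma> # Q, \<sigma> # x) (Q, x)"

text \<open>Computations C \<turnstile>* C' that additionally record the number n of push steps
  performed.  (Forgetting n gives exactly the reflexive transitive closure of qstep.)
  The push count is used to track the identity of queue symbols along a
  computation: the symbols pushed in a segment are exactly the last n symbols
  of the final queue.\<close>
inductive qsteps :: "'a list \<times> 'a list \<Rightarrow> nat \<Rightarrow> 'a list \<times> 'a list \<Rightarrow> bool" where
  refl: "qsteps C 0 C"
| push: "qsteps (Q @ [\<sigma>], x) n C \<Longrightarrow> qsteps (Q, \<sigma> # x) (Suc n) C"
| pop:  "qsteps (Q, x) n C \<Longrightarrow> qsteps (\<sigma> # Q, \<sigma> # x) n C"

end

theory Submission
  imports Defs
begin

text \<open>Along a computation every input symbol is either matched against the queue front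
  or pushed at the back; so the consumed input interleaves the symbols popped from the
  front with those pushed at the back, and the push count pins down the split of the
  final queue into old and new symbols.\<close>

lemma is_shuffle_Nil: "is_shuffle [] [] []"
  unfolding is_shuffle_def by (intro exI[of _ "[]"]) simp

lemma is_shuffle_Cons_left: "is_shuffle w u v \<Longrightarrow> is_shuffle (a # w) (a # u) v"
  unfolding is_shuffle_def
proof (elim exE conjE)
  fix xs ys
  assume shuffle: "length xs = length ys" "u = concat xs" "v = concat ys"
    "w = concat (map2 (@) xs ys)"
  show "\<exists>xs ys. length xs = length ys \<and> a # u = concat xs \<and> v = concat ys \<and>
      a # w = concat (map2 (@) xs ys)"
  proof (cases xs)
    case Nil
    with shuffle show ?thesis by (intro exI[of _ "[[a]]"] exI[of _ "[[]]"]) simp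
  next
    case (Cons x xs')
    with shuffle obtain y ys' where "ys = y # ys'" by (cases ys) auto
    with Cons shuffle show ?thesis by (intro exI[of _ "(a # x) # xs'"] exI[of _ ys]) simp
  qed
qed

lemma is_shuffle_Cons_right: "is_shuffle w u v \<Longrightarrow> is_shuffle (a # w) u (a # v)"
  unfolding is_shuffle_def
  by (elim exE conjE, intro exI[of _ "[] # _"] exI[of _ "[a] # _"]) auto

lemma concat_map2_append_Cons_snoc:
  "length xs = length ys \<Longrightarrow>
   concat (map2 (@) (p # ys) (xs @ [q])) = p @ concat (map2 (@) xs ys) @ q"
  by (induction xs ys arbitrary: p rule: list_induct2) auto

text \<open>Commutativity: regroup \<open>x\<^sub>1 y\<^sub>1 \<dots> x\<^sub>k y\<^sub>k\<close> as \<open>(\<epsilon> x\<^sub>1) (y\<^sub>1 x\<^sub>2) \<dots> (y\<^sub>k \<epsilon>)\<close>.\<close>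
lemma is_shuffle_commute: "is_shuffle w u v \<Longrightarrow> is_shuffle w v u"
  unfolding is_shuffle_def
proof (elim exE conjE)
  fix xs ys
  assume "length xs = length ys" "u = concat xs" "v = concat ys" "w = concat (map2 (@) xs ys)"
  then show "\<exists>xs ys. length xs = length ys \<and> v = concat xs \<and> u = concat ys \<and>
      w = concat (map2 (@) xs ys)"
    by (intro exI[of _ "[] # ys"] exI[of _ "xs @ [[]]"])
       (simp add: concat_map2_append_Cons_snoc)
qed

lemma is_subseq_if_is_shuffle:
  assumes "is_shuffle w u v"
  shows "is_subseq u w" "is_subseq v w"
  using assms is_shuffle_commute unfolding is_subseq_def by blast+

lemma qsteps_input_is_shuffle:
  assumes "qsteps (Q, x) n (Q', x')"
  shows "\<exists>y P Z. x = y @ x' \<and> length Z = n \<and> Q @ Z = P @ Q' \<and> is_shuffle y P Z"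
  using assms
proof (induction "(Q, x)" n "(Q', x')" arbitrary: Q x rule: qsteps.induct)
  case refl
  show ?case using is_shuffle_Nil by (intro exI[of _ "[]"]) simp
next
  case (push Q \<sigma> x n)
  then obtain y P Z where "x = y @ x'" "length Z = n" "Q @ [\<sigma>] @ Z = P @ Q'" "is_shuffle y P Z"
    by auto
  then show ?case
    by (intro exI[of _ "\<sigma> # y"] exI[of _ P] exI[of _ "\<sigma> # Z"]) (simp add: is_shuffle_Cons_right)
next
  case (pop Q x n \<sigma>)
  then obtain y P Z where "x = y @ x'" "length Z = n" "Q @ Z = P @ Q'" "is_shuffle y P Z"
    by auto
  then show ?case
    by (intro exI[of _ "\<sigma> # y"] exI[of _ "\<sigma> # P"] exI[of _ Z]) (simp add: is_shuffle_Cons_left)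
qed

lemma consumed_input_is_shuffle:
  assumes "qsteps (u @ Q, y @ x) (length z) (Q @ z, x)"
  shows "is_shuffle y u z"
proof -
  obtain y' P Z where consumed: "y @ x = y' @ x" and "length Z = length z"
    and queue: "u @ Q @ Z = P @ Q @ z" and "is_shuffle y' P Z"
    using qsteps_input_is_shuffle[OF assms] by auto
  have "length u = length P"
    using arg_cong[OF queue, of length] \<open>length Z = length z\<close> by simp
  with queue have "P = u" "Z = z"
    by (simp_all add: append_eq_append_conv)
  with consumed \<open>is_shuffle y' P Z\<close> show ?thesis by simp
qed

theorem lemma1:
  fixes u1 u2 u3 x1 x2 x3 z1 z2 :: "'a::finite list"
  assumes "qsteps (u1 @ u2 @ u3, x1 @ x2 @ x3) (length z1) (u2 @ u3 @ z1, x2 @ x3)"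
      and "qsteps (u2 @ u3 @ z1, x2 @ x3) (length z2) (u3 @ z1 @ z2, x3)"
  shows "is_subseq u2 x2 \<and> is_subseq z2 x2 \<and> is_shuffle x2 u2 z2"
proof -
  have "is_shuffle x2 u2 z2"
    using consumed_input_is_shuffle[of u2 "u3 @ z1" x2 x3 z2] assms(2) by simp
  then show ?thesis using is_subseq_if_is_shuffle by blast
qed

end
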